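(* Let $c\in\mathbb{R}^{m\times n}$ be a matrix (entries may be of any sign) such that $c_i([n])=C$ for all $i\in[m]$, for some real $C$. Let $A$ be an allocation that minimizes $\max_{i\in[m]}c_i(A_i)$ among all allocations and, subject to this, minimizes $\sum_{i\in[m]}c_i(A_i)$. Then $\sum_{i\in[m]}c_i(A_i)\le\frac1m\sum_{i\in[m]}c_i([n])$.
   Context: Notation: $[k]=\{1,\dots,k\}$; for $S\subseteq[n]$, $c_i(S)=\sum_{j\in S}c_{i,j}$. An allocation is a tuple $(A_1,\dots,A_m)$ of pairwise disjoint subsets of $[n]$ whose union is $[n]$. *)

theory Defs
  imports Complex_Main
begin

definition cost :: "(nat \<Rightarrow> nat \<Rightarrow> real) \<Rightarrow> nat \<Rightarrow> nat set \<Rightarrow> real" where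
  "cost c i S = (\<Sum>j\<in>S. c i j)"

definition is_allocation :: "nat \<Rightarrow> nat \<Rightarrow> (nat \<Rightarrow> nat set) \<Rightarrow> bool" where
  "is_allocation m n A \<longleftrightarrow>
     (\<forall>i\<in>{1..m}. \<forall>k\<in>{1..m}. i \<noteq> k \<longrightarrow> A i \<inter> A k = {}) \<and>
     (\<Union>i\<in>{1..m}. A i) = {1..n}"

definition max_cost :: "nat \<Rightarrow> (nat \<Rightarrow> nat \<Rightarrow> real) \<Rightarrow> (nat \<Rightarrow> nat set) \<Rightarrow> real" where
  "max_cost m c A = Max ((\<lambda>i. cost c i (A i)) ` {1..m})"

definition total_cost :: "nat \<Rightarrow> (nat \<Rightarrow> nat \<Rightarrow> real) \<Rightarrow> (nat \<Rightarrow> nat set) \<Rightarrow> real" where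
  "total_cost m c A = (\<Sum>i\<in>{1..m}. cost c i (A i))"

end

theory Submission
  imports Defs "HOL-Combinatorics.Permutations"
begin

text \<open>
Write \<open>d i j = c\<^sub>i(A\<^sub>j)\<close> and \<open>M\<close> for the optimal maximum cost. Handing bundle \<open>A\<^sub>k\<close> to
agent \<open>\<sigma> k\<close> for a permutation \<open>\<sigma>\<close> is again an allocation; if every \<open>d (\<sigma> k) k \<le> M\<close> it is still
max-optimal, so the trace of \<open>d\<close> does not exceed \<open>\<Sum>\<^sub>k d (\<sigma> k) k\<close>. For such a matrix some column has
its minimum on the diagonal: otherwise following, from each column, a row with a strictly smaller
entry yields a cycle whose rotation lowers the trace. Deleting that column and its row and
inducting produces a row \<open>r\<close> whose row sum \<open>c\<^sub>r([n])\<close> dominates the trace, i.e. the total cost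
of \<open>A\<close> is at most \<open>C\<close>, the common value of all \<open>c\<^sub>i([n])\<close>.
\<close>

definition diag_optimal :: "'a set \<Rightarrow> ('a \<Rightarrow> 'a \<Rightarrow> real) \<Rightarrow> real \<Rightarrow> bool" where
  "diag_optimal I d M \<longleftrightarrow>
     (\<forall>\<sigma>. \<sigma> permutes I \<and> (\<forall>k\<in>I. d (\<sigma> k) k \<le> M) \<longrightarrow> (\<Sum>k\<in>I. d k k) \<le> (\<Sum>k\<in>I. d (\<sigma> k) k))"

lemma self_map_restricts_to_permutation:
  assumes "finite I" "I \<noteq> {}" "\<forall>x\<in>I. f x \<in> I"
  obtains S \<sigma> where "S \<subseteq> I" "S \<noteq> {}" "\<sigma> permutes S" "\<forall>x\<in>S. \<sigma> x = f x"
proof -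
  define invariant where "invariant S \<longleftrightarrow> S \<subseteq> I \<and> S \<noteq> {} \<and> f ` S \<subseteq> S" for S
  have "invariant I" using assms by (auto simp: invariant_def)
  then obtain S where S: "invariant S" and S_min: "\<And>S'. invariant S' \<Longrightarrow> card S \<le> card S'"
    using ex_has_least_nat[of invariant I card] by blast
  have "S \<subseteq> I" "S \<noteq> {}" "f ` S \<subseteq> S" using S by (auto simp: invariant_def)
  have "finite S" using \<open>S \<subseteq> I\<close> \<open>finite I\<close> by (rule finite_subset)
  have "invariant (f ` S)" using \<open>S \<subseteq> I\<close> \<open>S \<noteq> {}\<close> \<open>f ` S \<subseteq> S\<close> by (auto simp: invariant_def)
  then have "card (f ` S) = card S"
    using S_min card_image_le[OF \<open>finite S\<close>, of f] by (simp add: le_antisym)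
  then have "inj_on f S" by (rule eq_card_imp_inj_on[OF \<open>finite S\<close>])
  define \<sigma> where "\<sigma> x = (if x \<in> S then f x else x)" for x
  have "\<sigma> permutes S"
    using \<open>inj_on f S\<close> \<open>finite S\<close> \<open>f ` S \<subseteq> S\<close>
    by (intro inj_imp_permutes) (auto simp: \<sigma>_def inj_on_def)
  then show thesis using that \<open>S \<subseteq> I\<close> \<open>S \<noteq> {}\<close> by (simp add: \<sigma>_def)
qed

lemma diag_optimal_column_min:
  assumes "finite I" "I \<noteq> {}" and diag: "\<forall>i\<in>I. d i i \<le> M" and opt: "diag_optimal I d M"
  shows "\<exists>k\<in>I. \<forall>r\<in>I. d k k \<le> d r k"
proof (rule ccontr)
  assume "\<not> ?thesis"
  then have "\<forall>k\<in>I. \<exists>r\<in>I. d r k < d k k" by (auto simp: not_le)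
  then obtain f where f: "\<forall>k\<in>I. f k \<in> I \<and> d (f k) k < d k k" by metis
  then obtain S \<sigma> where "S \<subseteq> I" "S \<noteq> {}" "\<sigma> permutes S" and \<sigma>_f: "\<forall>k\<in>S. \<sigma> k = f k"
    using self_map_restricts_to_permutation[OF \<open>finite I\<close> \<open>I \<noteq> {}\<close>, of f] by blast
  have \<sigma>: "\<sigma> permutes I" using \<open>\<sigma> permutes S\<close> \<open>S \<subseteq> I\<close> by (rule permutes_subset)
  have decrease: "\<forall>k\<in>I. d (\<sigma> k) k \<le> d k k"
    using f \<sigma>_f permutes_not_in[OF \<open>\<sigma> permutes S\<close>] by (metis less_imp_le order_refl)
  have "\<exists>k\<in>I. d (\<sigma> k) k < d k k"
    using f \<sigma>_f \<open>S \<subseteq> I\<close> \<open>S \<noteq> {}\<close> by fastforce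
  then have "(\<Sum>k\<in>I. d (\<sigma> k) k) < (\<Sum>k\<in>I. d k k)"
    using sum_strict_mono_ex1[OF \<open>finite I\<close> decrease] by blast
  moreover have "\<forall>k\<in>I. d (\<sigma> k) k \<le> M" using decrease diag by (meson order_trans)
  ultimately show False using opt \<sigma> by (auto simp: diag_optimal_def not_le)
qed

lemma diag_optimal_remove:
  assumes "finite I" "\<forall>i\<in>I. d i i \<le> M" "diag_optimal I d M"
  shows "diag_optimal (I - {k}) d M"
  unfolding diag_optimal_def
proof (intro allI impI, elim conjE)
  fix \<sigma> assume \<sigma>: "\<sigma> permutes (I - {k})" and bounded: "\<forall>j\<in>I - {k}. d (\<sigma> j) j \<le> M"
  show "(\<Sum>j\<in>I - {k}. d j j) \<le> (\<Sum>j\<in>I - {k}. d (\<sigma> j) j)"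
  proof (cases "k \<in> I")
    case True
    have "\<sigma> k = k" using \<sigma> by (simp add: permutes_not_in)
    have "\<sigma> permutes I" using \<sigma> by (rule permutes_subset) blast
    moreover have "\<forall>j\<in>I. d (\<sigma> j) j \<le> M" using bounded assms(2) \<open>\<sigma> k = k\<close> by auto
    ultimately have "(\<Sum>j\<in>I. d j j) \<le> (\<Sum>j\<in>I. d (\<sigma> j) j)"
      using assms(3) by (auto simp: diag_optimal_def)
    then show ?thesis
      using True \<open>\<sigma> k = k\<close> \<open>finite I\<close> by (simp add: sum.remove)
  next
    case False
    then show ?thesis using assms(3) \<sigma> bounded by (simp add: diag_optimal_def)
  qed
qed

lemma diag_optimal_row_dominates_trace:
  assumes "finite I" "I \<noteq> {}" "\<forall>i\<in>I. d i i \<le> M" "diag_optimal I d M"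
  shows "\<exists>r\<in>I. (\<Sum>k\<in>I. d k k) \<le> (\<Sum>k\<in>I. d r k)"
  using assms
proof (induction I rule: finite_remove_induct)
  case empty
  then show ?case by simp
next
  case (remove I)
  obtain k where "k \<in> I" and column_min: "\<forall>r\<in>I. d k k \<le> d r k"
    using diag_optimal_column_min[OF \<open>finite I\<close> \<open>I \<noteq> {}\<close> remove.prems(2,3)] by blast
  show ?case
  proof (cases "I - {k} = {}")
    case True
    then have "I = {k}" using \<open>k \<in> I\<close> by blast
    then show ?thesis by simp
  next
    case False
    moreover have "\<forall>i\<in>I - {k}. d i i \<le> M" using remove.prems(2) by blast
    moreover have "diag_optimal (I - {k}) d M"
      using diag_optimal_remove[OF \<open>finite I\<close>] remove.prems(2,3) .
    ultimately obtain r where "r \<in> I - {k}"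
      and r: "(\<Sum>j\<in>I - {k}. d j j) \<le> (\<Sum>j\<in>I - {k}. d r j)"
      using remove.IH[OF \<open>k \<in> I\<close>] by blast
    have "(\<Sum>j\<in>I. d j j) = d k k + (\<Sum>j\<in>I - {k}. d j j)"
      using \<open>finite I\<close> \<open>k \<in> I\<close> by (rule sum.remove)
    also have "\<dots> \<le> d r k + (\<Sum>j\<in>I - {k}. d r j)"
      using r column_min \<open>r \<in> I - {k}\<close> by (intro add_mono) auto
    also have "\<dots> = (\<Sum>j\<in>I. d r j)"
      using \<open>finite I\<close> \<open>k \<in> I\<close> by (simp add: sum.remove)
    finally show ?thesis using \<open>r \<in> I - {k}\<close> by blast
  qed
qed

lemma is_allocation_permute:
  assumes "\<sigma> permutes {1..m}" "is_allocation m n A"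
  shows "is_allocation m n (A \<circ> \<sigma>)"
proof -
  have "\<sigma> i \<noteq> \<sigma> k" if "i \<noteq> k" for i k
    using permutes_inj[OF assms(1)] that by (auto dest: injD)
  moreover have "(\<Union>i\<in>{1..m}. A (\<sigma> i)) = (\<Union>i\<in>\<sigma> ` {1..m}. A i)" by simp
  then have "(\<Union>i\<in>{1..m}. A (\<sigma> i)) = (\<Union>i\<in>{1..m}. A i)"
    by (simp only: permutes_image[OF assms(1)])
  ultimately show ?thesis
    using assms(2) permutes_in_image[OF assms(1)] by (simp add: is_allocation_def)
qed

lemma cost_sum_allocation:
  assumes "is_allocation m n A"
  shows "(\<Sum>j\<in>{1..m}. cost c i (A j)) = cost c i {1..n}"
proof -
  have "finite (A j)" if "j \<in> {1..m}" for j
  proof -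
    have "A j \<subseteq> {1..n}" using assms that unfolding is_allocation_def by blast
    then show ?thesis by (rule finite_subset) simp
  qed
  then have "cost c i (\<Union>j\<in>{1..m}. A j) = (\<Sum>j\<in>{1..m}. cost c i (A j))"
    using assms unfolding cost_def is_allocation_def by (intro sum.UNION_disjoint) auto
  then show ?thesis using assms by (simp add: is_allocation_def)
qed

lemma max_cost_le_iff:
  assumes "m > 0"
  shows "max_cost m c A \<le> M \<longleftrightarrow> (\<forall>i\<in>{1..m}. cost c i (A i) \<le> M)"
  using assms by (simp add: max_cost_def)

lemma cost_le_max_cost:
  "i \<in> {1..m} \<Longrightarrow> cost c i (A i) \<le> max_cost m c A"
  by (simp add: max_cost_def)

lemma lex_optimal_allocation_diag_optimal:
  assumes "m > 0" "is_allocation m n A"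
    and min_max: "\<forall>B. is_allocation m n B \<longrightarrow> max_cost m c A \<le> max_cost m c B"
    and min_sum: "\<forall>B. is_allocation m n B \<and> max_cost m c B = max_cost m c A
                      \<longrightarrow> total_cost m c A \<le> total_cost m c B"
  shows "diag_optimal {1..m} (\<lambda>i j. cost c i (A j)) (max_cost m c A)"
  unfolding diag_optimal_def
proof (intro allI impI, elim conjE)
  fix \<sigma> assume \<sigma>: "\<sigma> permutes {1..m}"
    and bounded: "\<forall>k\<in>{1..m}. cost c (\<sigma> k) (A k) \<le> max_cost m c A"
  define B where "B = A \<circ> inv \<sigma>"
  have B: "is_allocation m n B"
    unfolding B_def using permutes_inv[OF \<sigma>] assms(2) by (rule is_allocation_permute)
  have "cost c i (B i) \<le> max_cost m c A" if "i \<in> {1..m}" for i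
  proof -
    have "inv \<sigma> i \<in> {1..m}" using permutes_in_image[OF permutes_inv[OF \<sigma>]] that by simp
    then have "cost c (\<sigma> (inv \<sigma> i)) (A (inv \<sigma> i)) \<le> max_cost m c A" using bounded by blast
    then show ?thesis by (simp add: B_def permutes_inverses[OF \<sigma>])
  qed
  then have "max_cost m c B \<le> max_cost m c A" by (simp add: max_cost_le_iff[OF \<open>m > 0\<close>])
  moreover have "max_cost m c A \<le> max_cost m c B" using min_max B by blast
  ultimately have "max_cost m c B = max_cost m c A" by (rule order_antisym)
  then have "total_cost m c A \<le> total_cost m c B" using min_sum B by blast
  also have "total_cost m c B = (\<Sum>k\<in>{1..m}. cost c (\<sigma> k) (A k))"
    unfolding total_cost_def B_def
    by (subst sum.permute[OF \<sigma>]) (simp add: permutes_inverses[OF \<sigma>])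
  finally show "(\<Sum>k\<in>{1..m}. cost c k (A k)) \<le> (\<Sum>k\<in>{1..m}. cost c (\<sigma> k) (A k))"
    by (simp add: total_cost_def)
qed

theorem mainTheorem5:
  fixes m n :: nat and c :: "nat \<Rightarrow> nat \<Rightarrow> real" and C :: real
    and A :: "nat \<Rightarrow> nat set"
  assumes identical_totals: "\<forall>i\<in>{1..m}. cost c i {1..n} = C"
    and alloc: "is_allocation m n A"
    and min_max: "\<forall>B. is_allocation m n B \<longrightarrow> max_cost m c A \<le> max_cost m c B"
    and min_sum: "\<forall>B. is_allocation m n B \<and> max_cost m c B = max_cost m c A
                      \<longrightarrow> total_cost m c A \<le> total_cost m c B"
  shows "total_cost m c A \<le> (1 / real m) * (\<Sum>i\<in>{1..m}. cost c i {1..n})"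
proof (cases "m = 0")
  case True
  then show ?thesis by (simp add: total_cost_def)
next
  case False
  then have opt: "diag_optimal {1..m} (\<lambda>i j. cost c i (A j)) (max_cost m c A)"
    using lex_optimal_allocation_diag_optimal alloc min_max min_sum by blast
  have diag: "\<forall>i\<in>{1..m}. cost c i (A i) \<le> max_cost m c A"
    using cost_le_max_cost by blast
  have "{1..m} \<noteq> {}" using False by simp
  then obtain r where "r \<in> {1..m}"
    and "(\<Sum>k\<in>{1..m}. cost c k (A k)) \<le> (\<Sum>j\<in>{1..m}. cost c r (A j))"
    using diag_optimal_row_dominates_trace[OF finite_atLeastAtMost _ diag opt] by blast
  then have "total_cost m c A \<le> C"
    using cost_sum_allocation[OF alloc] identical_totals by (simp add: total_cost_def)
  moreover have "(1 / real m) * (\<Sum>i\<in>{1..m}. cost c i {1..n}) = C"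
    using identical_totals False by simp
  ultimately show ?thesis by simp
qed

end
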